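(* Let $r\ge 2$, $t\ge 2$, and let $G$ be an $(r,t,a_0)$-staircase graph of girth at least $t+1$. Then $a_0\ge r+1$.
   Context: Staircase graph: Let $r\ge 2$ and $t\ge 2$ be integers, $s=\lfloor (t-1)/2\rfloor$, and $a_0$ a positive integer; if $t$ is odd assume $t\ge 3$. An $(r,t,a_0)$-staircase graph is a finite simple graph $G$ whose vertex set is a disjoint union $\{v_\infty\}\cup V_0\cup V_1\cup\cdots\cup V_s$ such that: $|V_0|=a_0$ and $v_\infty$ is adjacent to every vertex of $V_0$ and to no other vertex; for each $i$ with $0\le i\le s-1$ (if $t$ is even) or $0\le i\le s-2$ (if $t$ is odd), every vertex of $V_i$ has exactly $r$ neighbours in $V_{i+1}$ and every vertex of $V_{i+1}$ has exactly one neighbour in $V_i$; if $t$ is even, every vertex of $V_s$ has exactly $r$ neighbours in $V_s$; if $t$ is odd, every vertex of $V_{s-1}$ has exactly $r$ neighbours in $V_s$ and every vertex of $V_s$ has exactly $r+1$ neighbours in $V_{s-1}$; and there are no other edges. Girth: length of a shortest cycle ($\infty$ if there is none). *)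

theory Defs
  imports Main "HOL-Library.Extended_Nat"
begin

definition simple_graph :: "'a set \<Rightarrow> ('a \<Rightarrow> 'a \<Rightarrow> bool) \<Rightarrow> bool" where
  "simple_graph V E \<longleftrightarrow> finite V \<and> (\<forall>x y. E x y \<longrightarrow> E y x) \<and> (\<forall>x. \<not> E x x)
     \<and> (\<forall>x y. E x y \<longrightarrow> x \<in> V \<and> y \<in> V)"

definition stair_step :: "nat \<Rightarrow> nat \<Rightarrow> bool" where
  "stair_step t i \<longleftrightarrow> (if even t then i < (t - 1) div 2 else i + 1 < (t - 1) div 2)"

definition staircase :: "'a set \<Rightarrow> ('a \<Rightarrow> 'a \<Rightarrow> bool) \<Rightarrow> nat \<Rightarrow> nat \<Rightarrow> nat \<Rightarrow> bool" where
  "staircase V E r t a0 \<longleftrightarrow> simple_graph V E \<and> 2 \<le> r \<and> 2 \<le> t \<and> 0 < a0 \<and>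
    (\<exists>vinf L. let s = (t - 1) div 2 in
       V = insert vinf (\<Union>i\<le>s. L i) \<and> vinf \<notin> (\<Union>i\<le>s. L i) \<and>
       (\<forall>i\<le>s. \<forall>j\<le>s. i \<noteq> j \<longrightarrow> L i \<inter> L j = {}) \<and>
       card (L 0) = a0 \<and>
       (\<forall>y. E vinf y \<longleftrightarrow> y \<in> L 0) \<and>
       (\<forall>i. stair_step t i \<longrightarrow>
          (\<forall>x\<in>L i. card {y \<in> L (Suc i). E x y} = r) \<and>
          (\<forall>y\<in>L (Suc i). card {x \<in> L i. E y x} = 1)) \<and>
       (even t \<longrightarrow> (\<forall>x\<in>L s. card {y \<in> L s. E x y} = r)) \<and>
       (odd t \<longrightarrow> (\<forall>x\<in>L (s - 1). card {y \<in> L s. E x y} = r) \<and>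
                   (\<forall>y\<in>L s. card {x \<in> L (s - 1). E y x} = r + 1)) \<and>
       (\<forall>x y. E x y \<longrightarrow>
          (x = vinf \<and> y \<in> L 0) \<or> (y = vinf \<and> x \<in> L 0) \<or>
          (\<exists>i. stair_step t i \<and> ((x \<in> L i \<and> y \<in> L (Suc i)) \<or> (y \<in> L i \<and> x \<in> L (Suc i)))) \<or>
          (even t \<and> x \<in> L s \<and> y \<in> L s) \<or>
          (odd t \<and> ((x \<in> L (s - 1) \<and> y \<in> L s) \<or> (y \<in> L (s - 1) \<and> x \<in> L s)))))"

definition is_cycle :: "'a set \<Rightarrow> ('a \<Rightarrow> 'a \<Rightarrow> bool) \<Rightarrow> 'a list \<Rightarrow> bool" where
  "is_cycle V E xs \<longleftrightarrow> 3 \<le> length xs \<and> distinct xs \<and> set xs \<subseteq> V \<and>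
     (\<forall>i < length xs. E (xs ! i) (xs ! ((i + 1) mod length xs)))"

definition girth :: "'a set \<Rightarrow> ('a \<Rightarrow> 'a \<Rightarrow> bool) \<Rightarrow> enat" where
  "girth V E = (INF xs \<in> {xs. is_cycle V E xs}. enat (length xs))"

end

theory Submission
  imports Defs
begin

text \<open>The layers V_0, ..., V_m below the top of the staircase form a forest rooted in V_0, since
  every vertex of V_(i+1) has exactly one neighbour in V_i.  If two distinct vertices of V_m had the
  same root, the two paths down to it would give a path between them of length at most 2m through
  the lower layers; closing it by a direct edge or through a common neighbour outside the lower
  layers yields a cycle of length at most 2m+2 <= t, contradicting the girth.  So r+1 vertices of
  V_m that pairwise are adjacent or share such a neighbour have distinct roots, and a0 >= r+1.  For
  even t they are a vertex of V_s together with its r neighbours in V_s; for odd t they are the r+1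
  neighbours in V_(s-1) of a vertex of V_s.\<close>

lemma is_cycleI:
  assumes "successively E C" "distinct C" "3 \<le> length C" "set C \<subseteq> V" "E (last C) (hd C)"
  shows "is_cycle V E C"
  unfolding is_cycle_def
proof (intro conjI allI impI)
  fix i assume i: "i < length C"
  show "E (C ! i) (C ! ((i + 1) mod length C))"
  proof (cases "Suc i < length C")
    case True
    then show ?thesis using successively_nth[OF assms(1)] by simp
  next
    case False
    with i have "i = length C - 1" "C \<noteq> []" by auto
    then show ?thesis using assms(5) by (simp add: last_conv_nth hd_conv_nth)
  qed
qed (use assms in auto)

lemma girth_le_length: "is_cycle V E C \<Longrightarrow> girth V E \<le> enat (length C)"
  unfolding girth_def by (rule INF_lower) simp

locale rooted_layers =
  fixes L :: "nat \<Rightarrow> 'a set" and E :: "'a \<Rightarrow> 'a \<Rightarrow> bool" and m :: nat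
  assumes unique_parent: "\<And>i y. i < m \<Longrightarrow> y \<in> L (Suc i) \<Longrightarrow> card {x \<in> L i. E y x} = 1"
    and layers_disjoint: "\<And>i j. i \<le> m \<Longrightarrow> j \<le> m \<Longrightarrow> i \<noteq> j \<Longrightarrow> L i \<inter> L j = {}"
    and sym: "\<And>x y. E x y \<Longrightarrow> E y x"
    and irrefl: "\<And>x. \<not> E x x"
begin

definition parent :: "nat \<Rightarrow> 'a \<Rightarrow> 'a" where
  "parent i y = (THE x. x \<in> L i \<and> E y x)"

fun root_of :: "nat \<Rightarrow> 'a \<Rightarrow> 'a" where
  "root_of 0 y = y"
| "root_of (Suc i) y = root_of i (parent i y)"

lemma parent_in_L_adj:
  assumes "i < m" "y \<in> L (Suc i)"
  shows "parent i y \<in> L i" "E y (parent i y)"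
proof -
  obtain x where x: "{x \<in> L i. E y x} = {x}"
    using unique_parent[OF assms] card_1_singletonE by blast
  then have "parent i y = x"
    unfolding parent_def by (intro the_equality) auto
  with x show "parent i y \<in> L i" "E y (parent i y)" by auto
qed

lemma root_in_L0: "j \<le> m \<Longrightarrow> y \<in> L j \<Longrightarrow> root_of j y \<in> L 0"
  by (induction j arbitrary: y) (simp_all add: parent_in_L_adj)

lemma not_in_lower_layers:
  assumes "j \<le> m" "x \<in> L j"
  shows "x \<notin> (\<Union>i<j. L i)"
proof
  assume "x \<in> (\<Union>i<j. L i)"
  then obtain i where "i < j" "x \<in> L i" by blast
  with assms layers_disjoint[of i j] show False by auto
qed

text \<open>The inner vertices Q of the path are the two branches down to the common ancestor.\<close>
lemma path_between_same_root:
  assumes "j \<le> m" "x \<in> L j" "y \<in> L j" "x \<noteq> y" "root_of j x = root_of j y"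
  shows "\<exists>Q. successively E (x # Q @ [y]) \<and> distinct (x # Q @ [y]) \<and> Q \<noteq> [] \<and>
             set Q \<subseteq> (\<Union>i<j. L i) \<and> length Q < 2 * j"
  using assms
proof (induction j arbitrary: x y)
  case 0
  then show ?case by simp
next
  case (Suc j)
  define px py where "px = parent j x" and "py = parent j y"
  have j: "j < m" using Suc.prems(1) by simp
  have px: "px \<in> L j" "E x px" and py: "py \<in> L j" "E y py"
    using parent_in_L_adj[OF j] Suc.prems(2,3) unfolding px_def py_def by auto
  have xy_top: "x \<notin> (\<Union>i<Suc j. L i)" "y \<notin> (\<Union>i<Suc j. L i)"
    using not_in_lower_layers Suc.prems(1-3) by blast+
  show ?case
  proof (cases "px = py")
    case True
    with px py xy_top Suc.prems(4) show ?thesis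
      by (intro exI[of _ "[px]"]) (auto intro: sym)
  next
    case False
    have "root_of j px = root_of j py"
      using Suc.prems(5) unfolding px_def py_def by simp
    then obtain Q where Q: "successively E (px # Q @ [py])" "distinct (px # Q @ [py])"
      "set Q \<subseteq> (\<Union>i<j. L i)" "length Q < 2 * j"
      using Suc.IH[of px py] j px py False by auto
    have "successively E ((x # px # Q @ [py]) @ [y])"
      unfolding successively_append_iff using Q(1) px(2) py(2) by (auto intro: sym)
    moreover have "set (px # Q @ [py]) \<subseteq> (\<Union>i<Suc j. L i)"
      using Q(3) px py by (auto simp: lessThan_Suc)
    ultimately show ?thesis
      using Q(2,4) xy_top Suc.prems(4) by (intro exI[of _ "px # Q @ [py]"]) auto
  qed
qed

lemma root_of_inj_on:
  assumes N: "N \<subseteq> L m"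
    and close: "\<And>u v. u \<in> N \<Longrightarrow> v \<in> N \<Longrightarrow> u \<noteq> v \<Longrightarrow>
                  E u v \<or> (\<exists>w \<in> V - (\<Union>i<m. L i). E w u \<and> E w v)"
    and layers_in_V: "\<And>i. i \<le> m \<Longrightarrow> L i \<subseteq> V"
    and no_short_cycle: "\<And>C. is_cycle V E C \<Longrightarrow> 2 * m + 2 < length C"
  shows "inj_on (root_of m) N"
proof (rule inj_onI, rule ccontr)
  fix u v assume uv: "u \<in> N" "v \<in> N" "root_of m u = root_of m v" "u \<noteq> v"
  then obtain Q where Q: "successively E (u # Q @ [v])" "distinct (u # Q @ [v])" "Q \<noteq> []"
    "set Q \<subseteq> (\<Union>i<m. L i)" "length Q < 2 * m"
    using path_between_same_root[of m u v] N by blast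
  have "(\<Union>i<m. L i) \<subseteq> V"
  proof (rule UN_least)
    fix i assume "i \<in> {..<m}"
    then show "L i \<subseteq> V" using layers_in_V by simp
  qed
  moreover have "u \<in> V" "v \<in> V" using uv(1,2) N layers_in_V[of m] by auto
  ultimately have P_in_V: "set (u # Q @ [v]) \<subseteq> V" using Q(4) by auto
  have P_length: "3 \<le> length (u # Q @ [v])" using Q(3) by (cases Q) auto
  from close[OF uv(1,2,4)] show False
  proof
    assume "E u v"
    then have "is_cycle V E (u # Q @ [v])"
      using Q(1,2) P_in_V P_length by (intro is_cycleI) (auto intro: sym)
    from no_short_cycle[OF this] Q(5) show False by simp
  next
    assume "\<exists>w \<in> V - (\<Union>i<m. L i). E w u \<and> E w v"
    then obtain w where w: "w \<in> V" "w \<notin> (\<Union>i<m. L i)" "E w u" "E w v" by blast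
    have "w \<noteq> u" "w \<noteq> v" using w(3,4) irrefl by auto
    moreover have "w \<notin> set Q" using w(2) Q(4) by blast
    ultimately have "is_cycle V E (w # u # Q @ [v])"
      using Q(1,2) P_in_V P_length w by (intro is_cycleI) (auto intro: sym)
    from no_short_cycle[OF this] Q(5) show False by simp
  qed
qed

lemma card_le_card_L0:
  assumes "finite (L 0)" "N \<subseteq> L m"
    and "\<And>u v. u \<in> N \<Longrightarrow> v \<in> N \<Longrightarrow> u \<noteq> v \<Longrightarrow>
           E u v \<or> (\<exists>w \<in> V - (\<Union>i<m. L i). E w u \<and> E w v)"
    and "\<And>i. i \<le> m \<Longrightarrow> L i \<subseteq> V"
    and "\<And>C. is_cycle V E C \<Longrightarrow> 2 * m + 2 < length C"
  shows "card N \<le> card (L 0)"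
proof (rule card_inj_on_le)
  show "inj_on (root_of m) N" using root_of_inj_on assms(2-5) by blast
  show "root_of m ` N \<subseteq> L 0" using root_in_L0 assms(2) by blast
qed (fact assms(1))

lemma closed_neighbourhood_card_le:
  assumes "finite (L 0)" "x \<in> L m" "finite {y \<in> L m. E x y}"
    and "\<And>i. i \<le> m \<Longrightarrow> L i \<subseteq> V"
    and "\<And>C. is_cycle V E C \<Longrightarrow> 2 * m + 2 < length C"
  shows "card {y \<in> L m. E x y} + 1 \<le> card (L 0)"
proof -
  let ?N = "insert x {y \<in> L m. E x y}"
  have "card ?N = card {y \<in> L m. E x y} + 1"
    using assms(3) irrefl by simp
  moreover have "card ?N \<le> card (L 0)"
  proof (rule card_le_card_L0)
    fix u v assume uv: "u \<in> ?N" "v \<in> ?N" "u \<noteq> v"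
    have x: "x \<in> V - (\<Union>i<m. L i)"
      using assms(2,4) not_in_lower_layers[of m x] by blast
    show "E u v \<or> (\<exists>w \<in> V - (\<Union>i<m. L i). E w u \<and> E w v)"
    proof (cases "u = x \<or> v = x")
      case True
      with uv show ?thesis by (auto intro: sym)
    next
      case False
      with uv x show ?thesis by blast
    qed
  qed (use assms in auto)
  ultimately show ?thesis by simp
qed

lemma neighbourhood_card_le:
  assumes "finite (L 0)" "y \<in> V" "y \<notin> (\<Union>i<m. L i)"
    and "\<And>i. i \<le> m \<Longrightarrow> L i \<subseteq> V"
    and "\<And>C. is_cycle V E C \<Longrightarrow> 2 * m + 2 < length C"
  shows "card {x \<in> L m. E y x} \<le> card (L 0)"
  by (rule card_le_card_L0) (use assms in auto)

end

lemma layer_nonempty: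
  assumes "L 0 \<noteq> {}" "0 < r"
    and "\<And>i x. i < m \<Longrightarrow> x \<in> L i \<Longrightarrow> card {y \<in> L (Suc i). E x y} = r"
  shows "j \<le> m \<Longrightarrow> L j \<noteq> {}"
proof (induction j)
  case (Suc j)
  then obtain x where "x \<in> L j" by auto
  with Suc.prems assms(2,3) have "{y \<in> L (Suc j). E x y} \<noteq> {}"
    by (metis Suc_le_lessD card.empty less_irrefl)
  then show ?case by auto
qed (use assms(1) in simp)

lemma staircase_layers:
  assumes "staircase V E r t a0" "0 < r" "2 \<le> t"
  obtains L m where "rooted_layers L E m" "2 * m + 2 \<le> t"
    "finite (L 0)" "card (L 0) = a0" "\<And>i. i \<le> m \<Longrightarrow> L i \<subseteq> V" "L m \<noteq> {}"
    "\<And>x. even t \<Longrightarrow> x \<in> L m \<Longrightarrow> card {y \<in> L m. E x y} = r"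
    "odd t \<Longrightarrow> \<exists>y \<in> V - (\<Union>i<m. L i). card {x \<in> L m. E y x} = r + 1"
proof -
  from assms(1) obtain vinf L where graph: "simple_graph V E" and "0 < a0"
    and V: "V = insert vinf (\<Union>i\<le>(t - 1) div 2. L i)"
    and disjoint: "\<forall>i\<le>(t - 1) div 2. \<forall>j\<le>(t - 1) div 2. i \<noteq> j \<longrightarrow> L i \<inter> L j = {}"
    and a0: "card (L 0) = a0"
    and steps: "\<forall>i. stair_step t i \<longrightarrow>
       (\<forall>x\<in>L i. card {y \<in> L (Suc i). E x y} = r) \<and>
       (\<forall>y\<in>L (Suc i). card {x \<in> L i. E y x} = 1)"
    and top_even: "even t \<longrightarrow> (\<forall>x\<in>L ((t - 1) div 2). card {y \<in> L ((t - 1) div 2). E x y} = r)"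
    and middle_odd: "odd t \<longrightarrow>
       (\<forall>x\<in>L ((t - 1) div 2 - 1). card {y \<in> L ((t - 1) div 2). E x y} = r)"
    and top_odd: "odd t \<longrightarrow>
       (\<forall>y\<in>L ((t - 1) div 2). card {x \<in> L ((t - 1) div 2 - 1). E y x} = r + 1)"
    unfolding staircase_def Let_def by blast
  define s where "s = (t - 1) div 2"
  \<comment> \<open>V_0, ..., V_m is the forest part: for odd t the top layer V_s has r+1 neighbours below.\<close>
  define m where "m = (if even t then s else s - 1)"
  have m_le_s: "m \<le> s" and t_m: "2 * m + 2 \<le> t" and s_odd: "odd t \<Longrightarrow> s = Suc m"
    using assms(3) unfolding m_def s_def by (auto elim!: oddE)
  have step: "stair_step t i" if "i < m" for i
    using that unfolding stair_step_def m_def s_def by (auto split: if_splits)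
  have layers_in_V: "L i \<subseteq> V" if "i \<le> s" for i
    using that unfolding V s_def by auto
  moreover have "finite V" using graph unfolding simple_graph_def by blast
  ultimately have finite_L0: "finite (L 0)" by (meson finite_subset zero_le)
  have layers: "rooted_layers L E m"
    using graph steps step disjoint m_le_s unfolding simple_graph_def s_def
    by unfold_locales auto
  have L_m: "L m \<noteq> {}"
    using layer_nonempty[of L r m E m] steps step finite_L0 a0 \<open>0 < a0\<close> assms(2) by fastforce
  have top_even_m: "card {y \<in> L m. E x y} = r" if "even t" "x \<in> L m" for x
    using top_even that unfolding m_def s_def by auto
  have top_odd_m: "\<exists>y \<in> V - (\<Union>i<m. L i). card {x \<in> L m. E y x} = r + 1" if "odd t"
  proof -
    from L_m obtain x where "x \<in> L m" by blast
    then have "card {y \<in> L s. E x y} = r"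
      using middle_odd that s_odd[OF that] unfolding s_def by auto
    then have "{y \<in> L s. E x y} \<noteq> {}" using assms(2) by (intro notI) simp
    then obtain y where y: "y \<in> L s" by blast
    have "y \<notin> (\<Union>i<m. L i)"
    proof
      assume "y \<in> (\<Union>i<m. L i)"
      then obtain i where "i < m" "y \<in> L i" by blast
      moreover have "L i \<inter> L s = {}"
        using disjoint \<open>i < m\<close> s_odd[OF that] unfolding s_def by simp
      ultimately show False using y by blast
    qed
    moreover have "y \<in> V" using y layers_in_V by blast
    ultimately show ?thesis
      using y top_odd that s_odd[OF that] unfolding s_def by auto
  qed
  show thesis
    using m_le_s layers_in_V
    by (intro that[OF layers t_m finite_L0 a0 _ L_m top_even_m top_odd_m]) auto
qed

theorem mainTheorem6:
  fixes V :: "'a set" and E :: "'a \<Rightarrow> 'a \<Rightarrow> bool" and r t a0 :: nat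
  assumes "2 \<le> r" and "2 \<le> t"
    and "staircase V E r t a0"
    and "enat (t + 1) \<le> girth V E"
  shows "r + 1 \<le> a0"
proof -
  obtain L m where "rooted_layers L E m" and t_m: "2 * m + 2 \<le> t"
    and L0: "finite (L 0)" "card (L 0) = a0" and layers_in_V: "\<And>i. i \<le> m \<Longrightarrow> L i \<subseteq> V"
    and "L m \<noteq> {}"
    and top_even: "\<And>x. even t \<Longrightarrow> x \<in> L m \<Longrightarrow> card {y \<in> L m. E x y} = r"
    and top_odd: "odd t \<Longrightarrow> \<exists>y \<in> V - (\<Union>i<m. L i). card {x \<in> L m. E y x} = r + 1"
    using staircase_layers[OF assms(3)] assms(1,2) by auto
  interpret rooted_layers L E m by fact
  have no_short_cycle: "2 * m + 2 < length C" if "is_cycle V E C" for C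
    using order_trans[OF assms(4) girth_le_length[OF that]] t_m by simp
  show ?thesis
  proof (cases "even t")
    case True
    from \<open>L m \<noteq> {}\<close> obtain x where x: "x \<in> L m" by blast
    with top_even[OF True] assms(1) have "finite {y \<in> L m. E x y}"
      by (intro card_ge_0_finite) simp
    from closed_neighbourhood_card_le[where V = V, OF L0(1) x this layers_in_V no_short_cycle]
    show ?thesis using top_even[OF True x] L0(2) by simp
  next
    case False
    with top_odd obtain y where y: "y \<in> V" "y \<notin> (\<Union>i<m. L i)"
      and "card {x \<in> L m. E y x} = r + 1"
      by blast
    with neighbourhood_card_le[OF L0(1) y layers_in_V no_short_cycle] L0(2) show ?thesis
      by simp
  qed
qed

end
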